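(* Let $\mathcal G$ be an almost-surely terminating CFG, and let $\sigma_0,\sigma_1,\sigma_2,\dots$ be an enumeration of $\mathsf{Reach}(\mathcal G)$ with $\sigma_0$ the terminal state. For $i,n\in\mathbb N$ define $$R(i,n)=\sup_{\mathfrak s}\mathbb P^i_{\mathfrak s}\big(\Diamond\{\sigma_m: m\ge n\}\big),$$ the supremum over schedulers of the probability that a run of $\mathcal G(\sigma_i)$ eventually visits some state of index at least $n$. Then for every $i\in\mathbb N$, $\lim_{n\to\infty}R(i,n)=0$.
   Context: A probabilistic control flow graph (CFG) is a tuple $\mathcal G=(L,V,l_{init},\mathbf x_{init},\mapsto,G,\mathsf{Pr},\mathsf{Upd})$. $L$ is a finite set of locations, partitioned into assignment, nondeterministic and probabilistic locations. The variables in $V$ range over $\mathbb Q$. $(l_{init},\mathbf x_{init})$ is the initial state. There are finitely many guarded transitions. At probabilistic locations, the outgoing transitions carry positive rational probabilities (given by arithmetic expressions in the variables) that sum to $1$ over enabled transitions. Assignment locations have at most one outgoing transition, carrying an update of one variable. A state is a pair $(l,\mathbf x)$, and successors are given by enabled transitions. Every state has at least one, and finitely many, successors. A scheduler $\mathfrak s$ maps finite paths ending in nondeterministic states to successors. $\mathbb P^i_{\mathfrak s}$ denotes the probability measure on runs of $\mathcal G(\sigma_i)$, which is $\mathcal G$ started at $\sigma_i$, induced by $\mathfrak s$. The terminal state is $\sigma_\bot=(l_{out},\mathbf 0)$. $\mathcal G$ is almost-surely terminating (AST) if $\inf_{\mathfrak s}\mathbb P_{\mathfrak s}[\text{run visits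 }\sigma_\bot]=1$. $\mathsf{Reach}(\mathcal G)$ is the set of states reachable by a finite path from the initial state. *)

theory Defs
  imports "HOL-Probability.Probability" "HOL-Library.Extended_Nat"
begin

text \<open>Guards, probability expressions and update expressions are represented semantically
  as functions of the valuation.\<close>

datatype loc_kind = AssignLoc | NondetLoc | ProbLoc

type_synonym 'v valuation = "'v \<Rightarrow> rat"
type_synonym ('l, 'v) state = "'l \<times> 'v valuation"

record ('l, 'v) transition =
  src   :: 'l
  tgt   :: 'l
  guard :: "'v valuation \<Rightarrow> bool"
  prb   :: "'v valuation \<Rightarrow> rat"
  upd   :: "('v \<times> ('v valuation \<Rightarrow> rat)) option"

record ('l, 'v) cfg =
  kind   :: "'l \<Rightarrow> loc_kind"
  l_init :: 'l
  x_init :: "'v valuation"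
  l_out  :: 'l
  trans  :: "('l, 'v) transition list"

definition enabled :: "('l, 'v) transition \<Rightarrow> ('l, 'v) state \<Rightarrow> bool" where
  "enabled \<tau> \<sigma> \<longleftrightarrow> src \<tau> = fst \<sigma> \<and> guard \<tau> (snd \<sigma>)"

definition eff :: "('l, 'v) transition \<Rightarrow> 'v valuation \<Rightarrow> 'v valuation" where
  "eff \<tau> x = (case upd \<tau> of None \<Rightarrow> x | Some (v, e) \<Rightarrow> x(v := e x))"

definition next_state :: "('l, 'v) transition \<Rightarrow> ('l, 'v) state \<Rightarrow> ('l, 'v) state" where
  "next_state \<tau> \<sigma> = (tgt \<tau>, eff \<tau> (snd \<sigma>))"

definition enabled_trans :: "('l, 'v) cfg \<Rightarrow> ('l, 'v) state \<Rightarrow> ('l, 'v) transition list" where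
  "enabled_trans G \<sigma> = filter (\<lambda>\<tau>. enabled \<tau> \<sigma>) (trans G)"

definition succs :: "('l, 'v) cfg \<Rightarrow> ('l, 'v) state \<Rightarrow> ('l, 'v) state set" where
  "succs G \<sigma> = (\<lambda>\<tau>. next_state \<tau> \<sigma>) ` set (enabled_trans G \<sigma>)"

definition term_state :: "('l, 'v) cfg \<Rightarrow> ('l, 'v) state" where
  "term_state G = (l_out G, (\<lambda>_. 0))"

definition init_state :: "('l, 'v) cfg \<Rightarrow> ('l, 'v) state" where
  "init_state G = (l_init G, x_init G)"

definition wf_cfg :: "('l, 'v) cfg \<Rightarrow> bool" where
  "wf_cfg G \<longleftrightarrow>
     \<comment> \<open>assignment locations have at most one outgoing transition, carrying an update;
         only transitions from assignment locations carry updates\<close>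
     (\<forall>l. kind G l = AssignLoc \<longrightarrow> length (filter (\<lambda>\<tau>. src \<tau> = l) (trans G)) \<le> 1) \<and>
     (\<forall>\<tau>\<in>set (trans G). (kind G (src \<tau>) = AssignLoc) \<longleftrightarrow> upd \<tau> \<noteq> None) \<and>
     \<comment> \<open>at probabilistic locations enabled transitions have positive probabilities summing to 1\<close>
     (\<forall>\<sigma>. kind G (fst \<sigma>) = ProbLoc \<longrightarrow>
        (\<forall>\<tau>\<in>set (enabled_trans G \<sigma>). prb \<tau> (snd \<sigma>) > 0) \<and>
        sum_list (map (\<lambda>\<tau>. prb \<tau> (snd \<sigma>)) (enabled_trans G \<sigma>)) = 1) \<and>
     \<comment> \<open>every state has at least one successor\<close>
     (\<forall>\<sigma>. succs G \<sigma> \<noteq> {})"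

definition Reach :: "('l, 'v) cfg \<Rightarrow> ('l, 'v) state set" where
  "Reach G = {\<sigma>. (init_state G, \<sigma>) \<in> {(a, b). b \<in> succs G a}\<^sup>*}"

type_synonym ('l, 'v) sched = "('l, 'v) state list \<Rightarrow> ('l, 'v) state"

definition valid_sched :: "('l, 'v) cfg \<Rightarrow> ('l, 'v) sched \<Rightarrow> bool" where
  "valid_sched G s \<longleftrightarrow>
     (\<forall>p. p \<noteq> [] \<and> kind G (fst (last p)) = NondetLoc \<longrightarrow> s p \<in> succs G (last p))"

definition step_prob :: "('l, 'v) cfg \<Rightarrow> ('l, 'v) sched \<Rightarrow> ('l, 'v) state list \<Rightarrow> ('l, 'v) state \<Rightarrow> real" where
  "step_prob G s p \<sigma>' =
     (let \<sigma> = last p in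
      case kind G (fst \<sigma>) of
        NondetLoc \<Rightarrow> (if s p = \<sigma>' then 1 else 0)
      | AssignLoc \<Rightarrow> (if \<sigma>' \<in> succs G \<sigma> then 1 else 0)
      | ProbLoc \<Rightarrow> sum_list (map (\<lambda>\<tau>. if next_state \<tau> \<sigma> = \<sigma>' then real_of_rat (prb \<tau> (snd \<sigma>)) else 0)
                                 (enabled_trans G \<sigma>)))"

fun path_prob_from :: "('l, 'v) cfg \<Rightarrow> ('l, 'v) sched \<Rightarrow> ('l, 'v) state list \<Rightarrow> ('l, 'v) state list \<Rightarrow> real" where
  "path_prob_from G s h [] = 1"
| "path_prob_from G s h (y # ys) = step_prob G s h y * path_prob_from G s (h @ [y]) ys"

fun cyl_prob :: "('l, 'v) cfg \<Rightarrow> ('l, 'v) sched \<Rightarrow> ('l, 'v) state \<Rightarrow> ('l, 'v) state list \<Rightarrow> real" where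
  "cyl_prob G s \<sigma>0 [] = 1"
| "cyl_prob G s \<sigma>0 (y # ys) = (if y = \<sigma>0 then 1 else 0) * path_prob_from G s [y] ys"

definition run_measure :: "('l, 'v) cfg \<Rightarrow> ('l, 'v) sched \<Rightarrow> ('l, 'v) state \<Rightarrow> ('l, 'v) state stream measure" where
  "run_measure G s \<sigma>0 =
     (SOME M. prob_space M \<and> sets M = sets (stream_space (count_space UNIV)) \<and>
        (\<forall>xs. emeasure M (sstart UNIV xs) = ennreal (cyl_prob G s \<sigma>0 xs)))"

definition prob_reach :: "('l, 'v) cfg \<Rightarrow> ('l, 'v) sched \<Rightarrow> ('l, 'v) state \<Rightarrow> ('l, 'v) state set \<Rightarrow> real" where
  "prob_reach G s \<sigma>0 T = measure (run_measure G s \<sigma>0) {\<omega>. \<exists>k. \<omega> !! k \<in> T}"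

definition AST :: "('l, 'v) cfg \<Rightarrow> bool" where
  "AST G \<longleftrightarrow> (INF s \<in> {s. valid_sched G s}. prob_reach G s (init_state G) {term_state G}) = 1"

end

theory Submission
  imports Defs "HOL-Library.Diagonal_Subsequence"
begin

text \<open>
  Fix a reachable state \<open>x\<close> and let \<open>S\<^sub>s(n)\<close> be the probability that a run from \<open>x\<close> under
  the scheduler \<open>s\<close> has not terminated within \<open>n\<close> steps. For every single scheduler \<open>S\<^sub>s(n) \<rightarrow> 0\<close>:
  otherwise the scheduler that first follows a path from the initial state to \<open>x\<close> (which has
  positive probability) and then imitates \<open>s\<close> would avoid termination with positive probability,
  contradicting almost-sure termination. Since every state has only finitely many successors, a
  diagonal argument extracts from schedulers violating a uniform bound a single scheduler
  violating it for all \<open>n\<close>, so in fact \<open>sup\<^sub>s S\<^sub>s(n) \<rightarrow> 0\<close>. Finally, a run that has terminated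
  within \<open>n\<close> steps only visits the finitely many states on paths of length \<open>n\<close> from \<open>x\<close> and the
  absorbing terminal state, and a tail \<open>{\<sigma>\<^sub>m | m \<ge> k}\<close> of an injective enumeration avoids any finite
  set for large \<open>k\<close>; so the probability of reaching the tail is eventually at most
  \<open>sup\<^sub>s S\<^sub>s(n)\<close>.
\<close>

section \<open>Sampling a successor from a uniform variable\<close>

text \<open>The weights \<open>w t\<close> of the elements of \<open>ts\<close> are laid out as consecutive intervals starting
  at \<open>c\<close>; \<open>interval_select w f d ts c u\<close> is \<open>f t\<close> for the interval containing \<open>u\<close> (and \<open>d\<close> past
  them), so for uniform \<open>u\<close> it returns \<open>f t\<close> with probability \<open>w t\<close>.\<close>
fun interval_select :: "('t \<Rightarrow> real) \<Rightarrow> ('t \<Rightarrow> 'a) \<Rightarrow> 'a \<Rightarrow> 't list \<Rightarrow> real \<Rightarrow> real \<Rightarrow> 'a" where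
  "interval_select w f d [] c u = d"
| "interval_select w f d (t # ts) c u =
     (if u < c + w t then f t else interval_select w f d ts (c + w t) u)"

lemma measurable_interval_select [measurable]:
  "(\<lambda>u. interval_select w f d ts c u) \<in> borel \<rightarrow>\<^sub>M count_space UNIV"
proof (induction ts arbitrary: c)
  case Nil
  show ?case by simp
next
  case (Cons t ts)
  note Cons.IH [measurable]
  show ?case by simp
qed

lemma emeasure_interval_select:
  assumes "\<forall>t\<in>set ts. w t > 0"
  shows "emeasure lborel {u \<in> {c..<c + sum_list (map w ts)}. interval_select w f d ts c u = y}
         = ennreal (sum_list (map (\<lambda>t. if f t = y then w t else 0) ts))"
  using assms
proof (induction ts arbitrary: c)
  case (Cons t ts)
  let ?S = "sum_list (map w ts)"
  let ?rest = "{u \<in> {c + w t..<(c + w t) + ?S}. interval_select w f d ts (c + w t) u = y}"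
  have pos: "w t > 0" and ts_pos: "\<forall>t\<in>set ts. w t > 0" using Cons.prems by auto
  have S: "?S \<ge> 0" using ts_pos by (intro sum_list_nonneg) (auto intro: less_imp_le)
  have R: "sum_list (map (\<lambda>t. if f t = y then w t else 0) ts) \<ge> 0"
    using ts_pos by (intro sum_list_nonneg) (auto intro: less_imp_le)
  have split: "{u \<in> {c..<c + sum_list (map w (t # ts))}. interval_select w f d (t # ts) c u = y}
      = (if f t = y then {c..<c + w t} else {}) \<union> ?rest"
    using pos S by (auto simp: algebra_simps)
  have rest_meas: "?rest \<in> sets borel" by measurable
  have "emeasure lborel ((if f t = y then {c..<c + w t} else {}) \<union> ?rest)
      = emeasure lborel (if f t = y then {c..<c + w t} else {}) + emeasure lborel ?rest"
    using rest_meas by (intro plus_emeasure[symmetric]) auto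
  also have "\<dots> = ennreal (if f t = y then w t else 0)
      + ennreal (sum_list (map (\<lambda>t. if f t = y then w t else 0) ts))"
    using Cons.IH[OF ts_pos] pos by auto
  also have "\<dots> = ennreal (sum_list (map (\<lambda>t. if f t = y then w t else 0) (t # ts)))"
    using pos R by (simp add: ennreal_plus)
  finally show ?case unfolding split .
qed simp

section \<open>Existence of the run measure\<close>

text \<open>\<open>run_measure\<close> is defined by a choice, so its properties rest on exhibiting one measure with
  the prescribed cylinder probabilities: runs driven by an i.i.d. sequence of uniform samples.\<close>

definition unif01 :: "real measure" where
  "unif01 = uniform_measure lborel {0..<1}"

lemma sets_unif01 [measurable_cong]: "sets unif01 = sets borel"
  by (simp add: unif01_def)

lemma prob_space_unif01: "prob_space unif01"
  unfolding unif01_def by (rule prob_space_uniform_measure) auto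

lemma emeasure_unif01: "A \<in> sets borel \<Longrightarrow> emeasure unif01 A = emeasure lborel ({0..<1} \<inter> A)"
  unfolding unif01_def by (subst emeasure_uniform_measure) (auto simp: divide_ennreal_def)

lemma prob_space_stream_unif01: "prob_space (stream_space unif01)"
  by (rule prob_space.prob_space_stream_space[OF prob_space_unif01])

lemma space_stream_unif01: "space (stream_space unif01) = UNIV"
  by (simp add: space_stream_space unif01_def)

lemma enabled_trans_AssignLoc:
  assumes "wf_cfg G" and "kind G (fst \<sigma>) = AssignLoc"
  obtains \<tau> where "enabled_trans G \<sigma> = [\<tau>]"
proof -
  have nonempty: "enabled_trans G \<sigma> \<noteq> []"
    using assms(1) by (cases \<sigma>) (auto simp: wf_cfg_def succs_def)
  have "enabled_trans G \<sigma> = filter (\<lambda>\<tau>. enabled \<tau> \<sigma>) (filter (\<lambda>\<tau>. src \<tau> = fst \<sigma>) (trans G))"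
    by (auto simp: enabled_trans_def enabled_def filter_filter intro!: filter_cong)
  then have "length (enabled_trans G \<sigma>) \<le> length (filter (\<lambda>\<tau>. src \<tau> = fst \<sigma>) (trans G))"
    by (metis length_filter_le)
  also have "length (filter (\<lambda>\<tau>. src \<tau> = fst \<sigma>) (trans G)) \<le> 1"
    using assms by (auto simp: wf_cfg_def)
  finally show ?thesis
    using nonempty that by (cases "enabled_trans G \<sigma>") auto
qed

lemma wf_cfg_ProbLoc:
  assumes "wf_cfg G" and "kind G (fst \<sigma>) = ProbLoc"
  shows "\<forall>\<tau>\<in>set (enabled_trans G \<sigma>). prb \<tau> (snd \<sigma>) > 0"
    and "sum_list (map (\<lambda>\<tau>. prb \<tau> (snd \<sigma>)) (enabled_trans G \<sigma>)) = 1"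
  using assms unfolding wf_cfg_def by blast+

lemma step_prob_nonneg: "wf_cfg G \<Longrightarrow> step_prob G s h y \<ge> 0"
  using wf_cfg_ProbLoc(1)[of G "last h"]
  by (fastforce simp: step_prob_def Let_def split: loc_kind.splits intro!: sum_list_nonneg)

lemma of_rat_sum_list: "of_rat (sum_list (map f xs)) = sum_list (map (\<lambda>x. of_rat (f x)) xs)"
  by (induction xs) (simp_all add: of_rat_add)

definition sample_succ :: "('l, 'v) cfg \<Rightarrow> ('l, 'v) sched \<Rightarrow> ('l, 'v) state list \<Rightarrow> real \<Rightarrow> ('l, 'v) state" where
  "sample_succ G s h u =
     (case kind G (fst (last h)) of
        NondetLoc \<Rightarrow> s h
      | AssignLoc \<Rightarrow> next_state (hd (enabled_trans G (last h))) (last h)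
      | ProbLoc \<Rightarrow> interval_select (\<lambda>\<tau>. real_of_rat (prb \<tau> (snd (last h))))
                    (\<lambda>\<tau>. next_state \<tau> (last h)) (last h) (enabled_trans G (last h)) 0 u)"

lemma measurable_sample_succ [measurable]: "sample_succ G s h \<in> borel \<rightarrow>\<^sub>M count_space UNIV"
  unfolding sample_succ_def by (cases "kind G (fst (last h))") simp_all

lemma emeasure_sample_succ:
  assumes wf: "wf_cfg G"
  shows "emeasure unif01 {u. sample_succ G s h u = y} = ennreal (step_prob G s h y)"
proof -
  have meas: "{u. sample_succ G s h u = y} \<in> sets borel" by measurable
  show ?thesis
  proof (cases "kind G (fst (last h))")
    case AssignLoc
    then obtain \<tau> where \<tau>: "enabled_trans G (last h) = [\<tau>]"
      using enabled_trans_AssignLoc[OF wf] by blast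
    then have "succs G (last h) = {next_state \<tau> (last h)}" by (simp add: succs_def)
    then show ?thesis
      using meas AssignLoc \<tau> by (auto simp: emeasure_unif01 sample_succ_def step_prob_def)
  next
    case ProbLoc
    let ?w = "\<lambda>\<tau>. real_of_rat (prb \<tau> (snd (last h)))"
    let ?ts = "enabled_trans G (last h)"
    have pos: "\<forall>\<tau>\<in>set ?ts. ?w \<tau> > 0"
      using wf_cfg_ProbLoc(1)[OF wf ProbLoc] by simp
    have "real_of_rat (sum_list (map (\<lambda>\<tau>. prb \<tau> (snd (last h))) ?ts)) = 1"
      using wf_cfg_ProbLoc(2)[OF wf ProbLoc] by simp
    then have total: "sum_list (map ?w ?ts) = 1"
      by (simp add: of_rat_sum_list)
    have "{0..<1} \<inter> {u. sample_succ G s h u = y}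
        = {u \<in> {0..<0 + sum_list (map ?w ?ts)}.
             interval_select ?w (\<lambda>\<tau>. next_state \<tau> (last h)) (last h) ?ts 0 u = y}"
      using ProbLoc total by (auto simp: sample_succ_def)
    then have "emeasure unif01 {u. sample_succ G s h u = y}
        = ennreal (sum_list (map (\<lambda>\<tau>. if next_state \<tau> (last h) = y then ?w \<tau> else 0) ?ts))"
      using emeasure_interval_select[OF pos] meas by (simp only: emeasure_unif01)
    then show ?thesis
      using ProbLoc by (simp add: step_prob_def Let_def)
  next
    case NondetLoc
    then show ?thesis
      using meas by (cases "s h = y") (simp_all add: emeasure_unif01 sample_succ_def step_prob_def)
  qed
qed

primcorec sample_run :: "('l, 'v) cfg \<Rightarrow> ('l, 'v) sched \<Rightarrow> ('l, 'v) state list \<Rightarrow> real stream \<Rightarrow> ('l, 'v) state stream" where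
  "sample_run G s h \<omega> = last h ## sample_run G s (h @ [sample_succ G s h (shd \<omega>)]) (stl \<omega>)"

lemma measurable_sample_run:
  "sample_run G s h \<in> stream_space unif01 \<rightarrow>\<^sub>M
     stream_space (count_space (UNIV :: ('l :: finite, 'v :: finite) state set))"
proof (rule measurable_stream_space2)
  fix n
  show "(\<lambda>\<omega>. sample_run G s h \<omega> !! n) \<in> stream_space unif01 \<rightarrow>\<^sub>M count_space UNIV"
  proof (induction n arbitrary: h)
    case 0
    show ?case by simp
  next
    case (Suc n)
    have succ: "sample_succ G s h \<in> unif01 \<rightarrow>\<^sub>M count_space UNIV"
      using measurable_sample_succ measurable_cong_sets[OF sets_unif01 refl] by blast
    have "(\<lambda>\<omega>. sample_run G s (h @ [sample_succ G s h (shd \<omega>)]) (stl \<omega>) !! n)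
        \<in> stream_space unif01 \<rightarrow>\<^sub>M count_space UNIV"
    proof (rule measurable_compose_countable'[where I=UNIV
          and f="\<lambda>c \<omega>. sample_run G s (h @ [c]) (stl \<omega>) !! n"])
      show "(\<lambda>\<omega>. sample_run G s (h @ [c]) (stl \<omega>) !! n) \<in> stream_space unif01 \<rightarrow>\<^sub>M count_space UNIV"
        for c using measurable_compose[OF measurable_stl Suc.IH] by simp
      show "(\<lambda>\<omega>. sample_succ G s h (shd \<omega>)) \<in> stream_space unif01 \<rightarrow>\<^sub>M count_space UNIV"
        using measurable_compose[OF measurable_shd succ] by simp
    qed simp
    then show ?case by simp
  qed
qed

lemma emeasure_sample_run_sstart:
  fixes G :: "('l :: finite, 'v :: finite) cfg"
  assumes wf: "wf_cfg G"
  shows "emeasure (stream_space unif01) (sample_run G s h -` sstart UNIV (last h # ys))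
         = ennreal (path_prob_from G s h ys)"
proof (induction ys arbitrary: h)
  case Nil
  then show ?case
    using prob_space.emeasure_space_1[OF prob_space_stream_unif01]
    by (simp add: space_stream_unif01 vimage_def)
next
  case (Cons y ys)
  let ?X = "sample_run G s h -` sstart UNIV (last h # y # ys)"
  have "?X = sample_run G s h -` sstart UNIV (last h # y # ys) \<inter> space (stream_space unif01)"
    by (simp add: space_stream_unif01)
  then have X_meas: "?X \<in> sets (stream_space unif01)"
    using measurable_sets[OF measurable_sample_run sstart_sets] by metis
  have tail: "{\<omega> \<in> space (stream_space unif01). u ## \<omega> \<in> ?X}
      = (if sample_succ G s h u = y then sample_run G s (h @ [y]) -` sstart UNIV (last (h @ [y]) # ys) else {})"
    for u by (auto simp: space_stream_unif01 sample_run.code[of G s h "_ ## _"])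
  have "emeasure (stream_space unif01) ?X
      = (\<integral>\<^sup>+u. emeasure (stream_space unif01) {\<omega> \<in> space (stream_space unif01). u ## \<omega> \<in> ?X} \<partial>unif01)"
    by (rule prob_space.emeasure_stream_space[OF prob_space_unif01 X_meas])
  also have "\<dots> = (\<integral>\<^sup>+u. ennreal (path_prob_from G s (h @ [y]) ys) * indicator {u. sample_succ G s h u = y} u \<partial>unif01)"
    unfolding tail using Cons.IH[of "h @ [y]"] by (intro nn_integral_cong) simp
  also have "\<dots> = ennreal (path_prob_from G s (h @ [y]) ys) * emeasure unif01 {u. sample_succ G s h u = y}"
    by (rule nn_integral_cmult_indicator) measurable
  also have "\<dots> = ennreal (path_prob_from G s h (y # ys))"
    using emeasure_sample_succ[OF wf] step_prob_nonneg[OF wf]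
    by (simp add: ennreal_mult'[symmetric] mult.commute)
  finally show ?case .
qed

lemma run_measure_exists:
  fixes G :: "('l :: finite, 'v :: finite) cfg"
  assumes wf: "wf_cfg G"
  shows "\<exists>M. prob_space M \<and> sets M = sets (stream_space (count_space UNIV)) \<and>
           (\<forall>xs. emeasure M (sstart UNIV xs) = ennreal (cyl_prob G s x xs))"
proof (intro exI conjI allI)
  let ?M = "distr (stream_space unif01) (stream_space (count_space UNIV)) (sample_run G s [x])"
  show "prob_space ?M"
    by (rule prob_space.prob_space_distr[OF prob_space_stream_unif01 measurable_sample_run])
  show "sets ?M = sets (stream_space (count_space UNIV))" by simp
  fix xs
  have "emeasure ?M (sstart UNIV xs) = emeasure (stream_space unif01) (sample_run G s [x] -` sstart UNIV xs)"
    using emeasure_distr[OF measurable_sample_run sstart_sets] by (simp add: space_stream_unif01)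
  also have "\<dots> = ennreal (cyl_prob G s x xs)"
  proof (cases xs)
    case Nil
    then show ?thesis
      using prob_space.emeasure_space_1[OF prob_space_stream_unif01] by (simp add: space_stream_unif01)
  next
    case (Cons y ys)
    show ?thesis
    proof (cases "y = x")
      case True
      then show ?thesis using emeasure_sample_run_sstart[OF wf, of s "[x]" ys] Cons by simp
    next
      case False
      then have "sample_run G s [x] -` sstart UNIV xs = {}" using Cons by auto
      then show ?thesis using Cons False by simp
    qed
  qed
  finally show "emeasure ?M (sstart UNIV xs) = ennreal (cyl_prob G s x xs)" .
qed

lemma
  fixes G :: "('l :: finite, 'v :: finite) cfg"
  assumes "wf_cfg G"
  shows prob_space_run_measure: "prob_space (run_measure G s x)"
    and sets_run_measure: "sets (run_measure G s x) = sets (stream_space (count_space UNIV))"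
    and emeasure_run_measure_sstart:
      "emeasure (run_measure G s x) (sstart UNIV xs) = ennreal (cyl_prob G s x xs)"
  using someI_ex[OF run_measure_exists[OF assms, of s x]] unfolding run_measure_def by blast+

lemma space_run_measure:
  fixes G :: "('l :: finite, 'v :: finite) cfg"
  assumes "wf_cfg G"
  shows "space (run_measure G s x) = UNIV"
  using sets_eq_imp_space_eq[OF sets_run_measure[OF assms]] by (simp add: space_stream_space)

section \<open>Paths\<close>

fun is_path_from :: "('l, 'v) cfg \<Rightarrow> ('l, 'v) state \<Rightarrow> ('l, 'v) state list \<Rightarrow> bool" where
  "is_path_from G a [] = True"
| "is_path_from G a (b # bs) \<longleftrightarrow> b \<in> succs G a \<and> is_path_from G b bs"

text \<open>The paths of \<open>n\<close> steps from \<open>x\<close>, as lists of the \<open>n + 1\<close> visited states.\<close>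
definition paths :: "('l, 'v) cfg \<Rightarrow> ('l, 'v) state \<Rightarrow> nat \<Rightarrow> ('l, 'v) state list set" where
  "paths G x n = {x # ys |ys. length ys = n \<and> is_path_from G x ys}"

lemma is_path_from_append:
  "is_path_from G a (xs @ ys) \<longleftrightarrow> is_path_from G a xs \<and> is_path_from G (last (a # xs)) ys"
  by (induction xs arbitrary: a) auto

lemma is_path_from_nth:
  "is_path_from G a ys \<Longrightarrow> i < length ys \<Longrightarrow> ys ! i \<in> succs G ((a # ys) ! i)"
  by (induction ys arbitrary: a i) (auto simp: nth_Cons split: nat.splits)

lemma is_path_from_absorbing:
  assumes absorbing: "succs G T = {T}"
  shows "is_path_from G a ys \<Longrightarrow> T \<in> set (a # ys) \<Longrightarrow> last (a # ys) = T"
proof (induction ys arbitrary: a)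
  case (Cons b ys)
  then have "T \<in> set (b # ys)" using absorbing by auto
  then show ?case using Cons by simp
qed simp

lemma finite_paths: "finite (paths G x n)"
proof -
  have "finite {ys. length ys = n \<and> is_path_from G a ys}" for a
  proof (induction n arbitrary: a)
    case (Suc n)
    have "{ys. length ys = Suc n \<and> is_path_from G a ys}
        \<subseteq> (\<Union>b\<in>succs G a. (#) b ` {ys. length ys = n \<and> is_path_from G b ys})"
      by (auto simp: length_Suc_conv)
    moreover have "finite (\<Union>b\<in>succs G a. (#) b ` {ys. length ys = n \<and> is_path_from G b ys})"
      using Suc by (auto simp: succs_def)
    ultimately show ?case by (rule finite_subset)
  qed simp
  then show ?thesis
    unfolding paths_def by (simp add: setcompr_eq_image)
qed

lemma Reach_path_from_init:
  assumes "x \<in> Reach G"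
  obtains ys where "is_path_from G (init_state G) ys" and "last (init_state G # ys) = x"
proof -
  have "(init_state G, x) \<in> {(a, b). b \<in> succs G a}\<^sup>*"
    using assms by (simp add: Reach_def)
  then have "\<exists>ys. is_path_from G (init_state G) ys \<and> last (init_state G # ys) = x"
  proof (induction rule: rtrancl_induct)
    case base
    show ?case by (intro exI[of _ "[]"]) simp
  next
    case (step b c)
    then obtain ys where "is_path_from G (init_state G) ys" "last (init_state G # ys) = b" by blast
    then show ?case
      using step by (intro exI[of _ "ys @ [c]"]) (simp add: is_path_from_append)
  qed
  then show ?thesis using that by blast
qed

section \<open>Cylinder probabilities\<close>

lemma path_prob_from_nonneg: "wf_cfg G \<Longrightarrow> path_prob_from G s h ys \<ge> 0"
  by (induction ys arbitrary: h) (auto intro!: mult_nonneg_nonneg step_prob_nonneg)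

lemma cyl_prob_nonneg: "wf_cfg G \<Longrightarrow> cyl_prob G s x xs \<ge> 0"
  by (cases xs) (auto intro!: path_prob_from_nonneg)

lemma path_prob_from_append:
  "path_prob_from G s h (ys @ zs) = path_prob_from G s h ys * path_prob_from G s (h @ ys) zs"
  by (induction ys arbitrary: h) auto

lemma step_prob_eq_0:
  assumes "valid_sched G s" and "h \<noteq> []" and y: "y \<notin> succs G (last h)"
  shows "step_prob G s h y = 0"
proof -
  have "sum_list (map (\<lambda>\<tau>. if next_state \<tau> (last h) = y then real_of_rat (prb \<tau> (snd (last h))) else 0)
          (enabled_trans G (last h))) = sum_list (map (\<lambda>_. 0) (enabled_trans G (last h)))"
    using y by (intro arg_cong[where f=sum_list] map_cong) (auto simp: succs_def)
  moreover have "kind G (fst (last h)) = NondetLoc \<Longrightarrow> s h \<noteq> y"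
    using assms by (auto simp: valid_sched_def)
  ultimately show ?thesis
    using y by (auto simp: step_prob_def Let_def split: loc_kind.splits)
qed

lemma path_prob_from_eq_0:
  "valid_sched G s \<Longrightarrow> h \<noteq> [] \<Longrightarrow> \<not> is_path_from G (last h) ys \<Longrightarrow> path_prob_from G s h ys = 0"
  by (induction ys arbitrary: h) (auto simp: step_prob_eq_0)

lemma cyl_prob_eq_0:
  assumes "valid_sched G s" and "length xs = Suc n" and "xs \<notin> paths G x n"
  shows "cyl_prob G s x xs = 0"
  using assms path_prob_from_eq_0[OF assms(1)] by (cases xs) (auto simp: paths_def)

lemma path_prob_from_cong:
  assumes "\<And>k. k < length ys \<Longrightarrow> kind G (fst (last (h @ take k ys))) = NondetLoc \<Longrightarrow>
             s (h @ take k ys) = s' (h @ take k ys)"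
  shows "path_prob_from G s h ys = path_prob_from G s' h ys"
  using assms
proof (induction ys arbitrary: h)
  case (Cons y ys)
  have "step_prob G s h y = step_prob G s' h y"
    using Cons.prems[of 0] by (auto simp: step_prob_def Let_def split: loc_kind.splits)
  moreover have "path_prob_from G s (h @ [y]) ys = path_prob_from G s' (h @ [y]) ys"
    using Cons.prems[of "Suc k" for k] by (intro Cons.IH) simp
  ultimately show ?case by simp
qed simp

lemma path_prob_from_shift:
  assumes "\<And>h'. h' \<noteq> [] \<Longrightarrow> s' (pre @ h') = s h'" and "h \<noteq> []"
  shows "path_prob_from G s' (pre @ h) ys = path_prob_from G s h ys"
  using assms(2)
proof (induction ys arbitrary: h)
  case (Cons y ys)
  have "step_prob G s' (pre @ h) y = step_prob G s h y"
    using assms(1) Cons.prems by (auto simp: step_prob_def Let_def split: loc_kind.splits)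
  moreover have "path_prob_from G s' (pre @ h @ [y]) ys = path_prob_from G s (h @ [y]) ys"
    using Cons.IH[of "h @ [y]"] by simp
  ultimately show ?case by simp
qed simp

lemma step_prob_pos:
  assumes wf: "wf_cfg G" and y: "y \<in> succs G (last h)"
    and nondet: "kind G (fst (last h)) = NondetLoc \<Longrightarrow> s h = y"
  shows "step_prob G s h y > 0"
proof (cases "kind G (fst (last h))")
  case ProbLoc
  let ?p = "\<lambda>\<tau>. if next_state \<tau> (last h) = y then real_of_rat (prb \<tau> (snd (last h))) else 0"
  have pos: "\<forall>\<tau>\<in>set (enabled_trans G (last h)). prb \<tau> (snd (last h)) > 0"
    by (rule wf_cfg_ProbLoc(1)[OF wf ProbLoc])
  obtain \<tau> where \<tau>: "\<tau> \<in> set (enabled_trans G (last h))" "next_state \<tau> (last h) = y"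
    using y by (auto simp: succs_def)
  have nonneg: "\<forall>p\<in>set (map ?p (enabled_trans G (last h))). p \<ge> 0"
    using pos by (auto intro: less_imp_le)
  moreover have "?p \<tau> > 0"
    using pos \<tau> by simp
  then have "sum_list (map ?p (enabled_trans G (last h))) \<noteq> 0"
    using \<tau>(1) sum_list_nonneg_eq_0_iff[of "map ?p (enabled_trans G (last h))"] nonneg
    by (metis (no_types, lifting) image_eqI less_numeral_extra(3) list.set_map)
  ultimately show ?thesis
    using ProbLoc sum_list_nonneg[of "map ?p (enabled_trans G (last h))"]
    by (simp add: step_prob_def Let_def)
qed (use nondet y in \<open>auto simp: step_prob_def Let_def\<close>)

lemma path_prob_from_pos:
  assumes wf: "wf_cfg G"
  shows "h \<noteq> [] \<Longrightarrow> is_path_from G (last h) ys \<Longrightarrow>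
    (\<And>k. k < length ys \<Longrightarrow> kind G (fst (last (h @ take k ys))) = NondetLoc \<Longrightarrow> s (h @ take k ys) = ys ! k) \<Longrightarrow>
    path_prob_from G s h ys > 0"
proof (induction ys arbitrary: h)
  case (Cons y ys)
  have "step_prob G s h y > 0"
    using Cons.prems(2) Cons.prems(3)[of 0] by (intro step_prob_pos[OF wf]) auto
  moreover have "path_prob_from G s (h @ [y]) ys > 0"
    using Cons.prems(2) Cons.prems(3)[of "Suc k" for k] by (intro Cons.IH) auto
  ultimately show ?case by simp
qed simp

lemma sstart_eq_stake: "\<omega> \<in> sstart UNIV xs \<longleftrightarrow> stake (length xs) \<omega> = xs"
  by (induction xs arbitrary: \<omega>) (auto simp: stream_eq_Stream_iff)

lemma mem_UN_sstart_iff: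
  assumes "X \<subseteq> {xs. length xs = n}"
  shows "\<omega> \<in> (\<Union>xs\<in>X. sstart UNIV xs) \<longleftrightarrow> stake n \<omega> \<in> X"
proof
  assume "\<omega> \<in> (\<Union>xs\<in>X. sstart UNIV xs)"
  then obtain xs where "xs \<in> X" and "stake (length xs) \<omega> = xs"
    by (auto simp: sstart_eq_stake)
  then show "stake n \<omega> \<in> X" using assms by auto
next
  assume "stake n \<omega> \<in> X"
  then show "\<omega> \<in> (\<Union>xs\<in>X. sstart UNIV xs)"
    by (intro UN_I[of "stake n \<omega>"]) (simp_all add: sstart_eq_stake)
qed

lemma disjoint_family_on_sstart:
  assumes "X \<subseteq> {xs. length xs = n}"
  shows "disjoint_family_on (sstart UNIV) X"
  unfolding disjoint_family_on_def
proof (intro ballI impI)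
  fix xs ys assume "xs \<in> X" "ys \<in> X" "xs \<noteq> ys"
  moreover from assms \<open>xs \<in> X\<close> \<open>ys \<in> X\<close> have "length xs = n" "length ys = n"
    by auto
  ultimately show "sstart UNIV xs \<inter> sstart UNIV ys = {}"
    by (auto simp: sstart_eq_stake)
qed

lemma length_paths: "xs \<in> paths G x n \<Longrightarrow> length xs = Suc n"
  by (auto simp: paths_def)

lemma stake_preimage_in_sets_run_measure:
  fixes G :: "('l :: finite, 'v :: finite) cfg"
  assumes "wf_cfg G"
  shows "{\<omega>. stake n \<omega> \<in> A} \<in> sets (run_measure G s x)"
proof -
  have "{\<omega>. stake n \<omega> \<in> A}
      = stake n -` A \<inter> space (stream_space (count_space (UNIV :: ('l, 'v) state set)))"
    by (auto simp: space_stream_space)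
  also have "\<dots> \<in> sets (stream_space (count_space UNIV))"
    by (rule measurable_sets[OF measurable_stake]) simp
  finally show ?thesis by (simp add: sets_run_measure[OF assms])
qed

lemma emeasure_run_stake:
  fixes G :: "('l :: finite, 'v :: finite) cfg"
  assumes wf: "wf_cfg G" and valid: "valid_sched G s"
  shows "emeasure (run_measure G s x) {\<omega>. stake (Suc n) \<omega> \<in> A}
         = ennreal (\<Sum>xs\<in>paths G x n \<inter> A. cyl_prob G s x xs)"
proof -
  let ?M = "run_measure G s x"
  let ?B = "paths G x n \<inter> A" and ?C = "{xs. length xs = Suc n} \<inter> A - paths G x n"
  have cyl_sets: "sstart UNIV xs \<in> sets ?M" for xs
    using sets_run_measure[OF wf] sstart_sets by auto
  have split: "{\<omega>. stake (Suc n) \<omega> \<in> A} = (\<Union>xs\<in>?B. sstart UNIV xs) \<union> (\<Union>xs\<in>?C. sstart UNIV xs)"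
  proof -
    have "?B \<subseteq> {xs. length xs = Suc n}" and "?C \<subseteq> {xs. length xs = Suc n}"
      by (auto dest: length_paths)
    from this[THEN mem_UN_sstart_iff] show ?thesis
      by (auto simp del: stake.simps)
  qed
  have null: "(\<Union>xs\<in>?C. sstart UNIV xs) \<in> null_sets ?M"
  proof (rule null_sets_UN')
    fix xs assume "xs \<in> ?C"
    then have "cyl_prob G s x xs = 0" using cyl_prob_eq_0[OF valid] by auto
    then show "sstart UNIV xs \<in> null_sets ?M"
      using emeasure_run_measure_sstart[OF wf, of s x xs] cyl_sets by (simp add: null_setsI)
  qed (rule countableI_type)
  have disjoint: "disjoint_family_on (sstart UNIV) ?B"
    by (rule disjoint_family_on_sstart) (auto dest: length_paths)
  have finite: "finite ?B" using finite_paths by blast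
  have "emeasure ?M {\<omega>. stake (Suc n) \<omega> \<in> A} = emeasure ?M (\<Union>xs\<in>?B. sstart UNIV xs)"
    unfolding split by (rule emeasure_Un_null_set[OF _ null]) (use finite cyl_sets in blast)
  also have "\<dots> = (\<Sum>xs\<in>?B. emeasure ?M (sstart UNIV xs))"
    using finite disjoint cyl_sets by (intro sum_emeasure[symmetric]) auto
  also have "\<dots> = ennreal (\<Sum>xs\<in>?B. cyl_prob G s x xs)"
    using cyl_prob_nonneg[OF wf] by (simp add: emeasure_run_measure_sstart[OF wf] sum_ennreal)
  finally show ?thesis .
qed

lemma measure_run_stake:
  fixes G :: "('l :: finite, 'v :: finite) cfg"
  assumes "wf_cfg G" and "valid_sched G s"
  shows "measure (run_measure G s x) {\<omega>. stake (Suc n) \<omega> \<in> A}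
         = (\<Sum>xs\<in>paths G x n \<inter> A. cyl_prob G s x xs)"
  using emeasure_run_stake[OF assms] cyl_prob_nonneg[OF assms(1)]
  by (simp add: measure_def sum_nonneg)

lemma AE_run_stake_in_paths:
  fixes G :: "('l :: finite, 'v :: finite) cfg"
  assumes wf: "wf_cfg G" and valid: "valid_sched G s"
  shows "AE \<omega> in run_measure G s x. \<forall>n. stake (Suc n) \<omega> \<in> paths G x n"
proof (subst AE_all_countable, intro allI)
  fix n
  let ?N = "{\<omega>. stake (Suc n) \<omega> \<in> - paths G x n}"
  have "emeasure (run_measure G s x) ?N = 0"
    using emeasure_run_stake[OF wf valid, where n=n and A="- paths G x n"] by (simp del: stake.simps)
  then have "?N \<in> null_sets (run_measure G s x)"
    using stake_preimage_in_sets_run_measure[OF wf] by (rule null_setsI)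
  then show "AE \<omega> in run_measure G s x. stake (Suc n) \<omega> \<in> paths G x n"
    by (rule AE_I') (auto simp del: stake.simps)
qed

section \<open>Survival probability\<close>

definition survival_prob :: "('l, 'v) cfg \<Rightarrow> ('l, 'v) sched \<Rightarrow> ('l, 'v) state \<Rightarrow> nat \<Rightarrow> real" where
  "survival_prob G s x n = measure (run_measure G s x) {\<omega>. \<forall>k\<le>n. \<omega> !! k \<noteq> term_state G}"

lemma mem_set_stake_iff: "z \<in> set (stake n \<omega>) \<longleftrightarrow> (\<exists>k<n. \<omega> !! k = z)"
  by (auto simp: in_set_conv_nth)

lemma survival_event_eq_stake:
  "{\<omega>. \<forall>k\<le>n. \<omega> !! k \<noteq> T} = {\<omega>. stake (Suc n) \<omega> \<in> {xs. T \<notin> set xs}}"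
  by (auto simp only: mem_Collect_eq mem_set_stake_iff less_Suc_eq_le)

lemma survival_event_in_sets:
  fixes G :: "('l :: finite, 'v :: finite) cfg"
  assumes "wf_cfg G"
  shows "{\<omega>. \<forall>k\<le>n. \<omega> !! k \<noteq> term_state G} \<in> sets (run_measure G s x)"
  unfolding survival_event_eq_stake by (rule stake_preimage_in_sets_run_measure[OF assms])

lemma survival_prob_eq_sum:
  fixes G :: "('l :: finite, 'v :: finite) cfg"
  assumes "wf_cfg G" and "valid_sched G s"
  shows "survival_prob G s x n = (\<Sum>xs\<in>{xs \<in> paths G x n. term_state G \<notin> set xs}. cyl_prob G s x xs)"
  unfolding survival_prob_def survival_event_eq_stake measure_run_stake[OF assms]
  by (rule sum.cong) auto

lemma survival_prob_antimono:
  fixes G :: "('l :: finite, 'v :: finite) cfg"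
  assumes wf: "wf_cfg G" and "m \<le> n"
  shows "survival_prob G s x n \<le> survival_prob G s x m"
proof -
  interpret prob_space "run_measure G s x" by (rule prob_space_run_measure[OF wf])
  show ?thesis
    unfolding survival_prob_def using assms(2)
    by (intro finite_measure_mono survival_event_in_sets[OF wf, of m s x]) auto
qed

lemma survival_prob_tendsto:
  fixes G :: "('l :: finite, 'v :: finite) cfg"
  assumes wf: "wf_cfg G"
  shows "survival_prob G s x \<longlonglongrightarrow> 1 - prob_reach G s x {term_state G}"
proof -
  interpret prob_space "run_measure G s x" by (rule prob_space_run_measure[OF wf])
  define E where "E n = {\<omega>. \<forall>k\<le>n. \<omega> !! k \<noteq> term_state G}" for n
  define Hit where "Hit = {\<omega>. \<exists>k. \<omega> !! k \<in> {term_state G}}"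
  have E_sets: "E n \<in> events" for n
    unfolding E_def by (rule survival_event_in_sets[OF wf])
  have "decseq E"
    unfolding decseq_def E_def by auto
  then have "(\<lambda>n. prob (E n)) \<longlonglongrightarrow> prob (\<Inter>n. E n)"
    using E_sets by (intro finite_Lim_measure_decseq) auto
  moreover have Hit_eq: "Hit = space (run_measure G s x) - (\<Inter>n. E n)"
    by (auto simp: E_def Hit_def space_run_measure[OF wf])
  then have "Hit \<in> events"
    using E_sets by (simp add: sets.Diff sets.countable_INT)
  then have "prob (\<Inter>n. E n) = 1 - prob Hit"
    using Hit_eq prob_compl[of Hit] by (simp add: Diff_Diff_Int space_run_measure[OF wf])
  ultimately show ?thesis
    unfolding survival_prob_def prob_reach_def E_def[symmetric] Hit_def[symmetric] by simp
qed

lemma run_step_in_succs: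
  assumes "\<forall>m. stake (Suc m) \<omega> \<in> paths G x m"
  shows "\<omega> !! Suc k \<in> succs G (\<omega> !! k)"
proof -
  obtain ys where stake_eq: "stake (Suc (Suc k)) \<omega> = x # ys" and "length ys = Suc k" and "is_path_from G x ys"
    using assms[rule_format, of "Suc k"] by (auto simp: paths_def)
  then have "ys ! k \<in> succs G ((x # ys) ! k)"
    by (intro is_path_from_nth) auto
  moreover have "(x # ys) ! k = \<omega> !! k"
    unfolding stake_eq[symmetric] by (rule stake_nth) simp
  moreover have "ys ! k = \<omega> !! Suc k"
    using stake_nth[of "Suc k" "Suc (Suc k)" \<omega>] unfolding stake_eq by simp
  ultimately show ?thesis by simp
qed

lemma run_absorbed:
  assumes absorbing: "succs G T = {T}" and path: "\<forall>m. stake (Suc m) \<omega> \<in> paths G x m"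
    and "\<omega> !! j = T" and "j \<le> k"
  shows "\<omega> !! k = T"
  using assms(4,3)
proof (induction k rule: dec_induct)
  case (step k)
  then show ?case
    using run_step_in_succs[OF path, of k] absorbing by simp
qed

lemma prob_reach_le_survival_prob:
  fixes G :: "('l :: finite, 'v :: finite) cfg"
  assumes wf: "wf_cfg G" and absorbing: "succs G (term_state G) = {term_state G}"
    and valid: "valid_sched G s"
    and disjoint: "T \<inter> (\<Union> (set ` paths G x n) \<union> {term_state G}) = {}"
  shows "prob_reach G s x T \<le> survival_prob G s x n"
proof -
  interpret prob_space "run_measure G s x" by (rule prob_space_run_measure[OF wf])
  have survives: "\<forall>j\<le>n. \<omega> !! j \<noteq> term_state G"
    if path: "\<forall>m. stake (Suc m) \<omega> \<in> paths G x m" and hit: "\<omega> !! k \<in> T" for \<omega> k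
  proof (intro allI impI notI)
    fix j assume "j \<le> n" and terminated: "\<omega> !! j = term_state G"
    show False
    proof (cases "k \<le> n")
      case True
      then have "\<omega> !! k \<in> set (stake (Suc n) \<omega>)"
        unfolding mem_set_stake_iff by (intro exI[of _ k]) simp
      then show False
        using path[rule_format, of n] hit disjoint by blast
    next
      case False
      then show False
        using run_absorbed[OF absorbing path terminated, of k] \<open>j \<le> n\<close> hit disjoint by auto
    qed
  qed
  have "AE \<omega> in run_measure G s x. \<omega> \<in> {\<omega>. \<exists>k. \<omega> !! k \<in> T} \<longrightarrow>
      \<omega> \<in> {\<omega>. \<forall>k\<le>n. \<omega> !! k \<noteq> term_state G}"
    using AE_run_stake_in_paths[OF wf valid, of x]
  proof (rule AE_mp)
    show "AE \<omega> in run_measure G s x. (\<forall>m. stake (Suc m) \<omega> \<in> paths G x m) \<longrightarrow>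
        \<omega> \<in> {\<omega>. \<exists>k. \<omega> !! k \<in> T} \<longrightarrow> \<omega> \<in> {\<omega>. \<forall>k\<le>n. \<omega> !! k \<noteq> term_state G}"
      using survives by (intro AE_I2) blast
  qed
  then show ?thesis
    unfolding prob_reach_def survival_prob_def
    by (intro finite_measure_mono_AE survival_event_in_sets[OF wf]) auto
qed

section \<open>Compactness of the space of schedulers\<close>

lemma pointwise_convergent_subseq:
  fixes f :: "nat \<Rightarrow> 'a :: countable \<Rightarrow> 'b"
  assumes fin: "\<And>a. finite (V a)" and range: "\<And>k a. f k a \<in> V a"
  obtains r g where "strict_mono r" and "\<And>a. \<forall>\<^sub>F j in sequentially. f (r j) a = g a"
proof -
  interpret subseqs "\<lambda>n r. \<exists>c. \<forall>k. f (r k) (from_nat n) = c"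
  proof
    fix n and s :: "nat \<Rightarrow> nat"
    assume "strict_mono s"
    let ?\<phi> = "\<lambda>k. f (s k) (from_nat n)"
    have "range ?\<phi> \<subseteq> V (from_nat n)"
      using range by blast
    then have "finite (range ?\<phi>)"
      using fin finite_subset by blast
    then obtain c where c: "infinite (?\<phi> -` {c})"
      using inf_img_fin_dom[of ?\<phi> UNIV] by blast
    show "\<exists>r :: nat \<Rightarrow> nat. strict_mono r \<and> (\<exists>c. \<forall>k. f ((s \<circ> r) k) (from_nat n) = c)"
      using strict_mono_enumerate[OF c] enumerate_in_set[OF c]
      by (intro exI[where x="enumerate (?\<phi> -` {c})"]) auto
  qed
  define g where "g a = f (diagseq (Suc (to_nat a))) a" for a
  have "\<forall>\<^sub>F j in sequentially. f (diagseq j) a = g a" for a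
  proof -
    obtain c where c: "\<forall>k. f (diagseq (Suc (to_nat a) + k)) a = c"
      using diagseq_holds[of "to_nat a"] by auto
    show ?thesis
    proof (rule eventually_sequentiallyI[of "Suc (to_nat a)"])
      fix j assume "Suc (to_nat a) \<le> j"
      then show "f (diagseq j) a = g a"
        using c[rule_format, of "j - Suc (to_nat a)"] c[rule_format, of 0] by (simp add: g_def)
    qed
  qed
  then show ?thesis
    using that subseq_diagseq by blast
qed

text \<open>The histories on which a scheduler's choices affect \<open>survival_prob G s x n\<close>.\<close>
definition path_prefixes :: "('l, 'v) cfg \<Rightarrow> ('l, 'v) state \<Rightarrow> nat \<Rightarrow> ('l, 'v) state list set" where
  "path_prefixes G x n = {take (Suc k) xs |xs k. xs \<in> paths G x n \<and> k < n}"

lemma finite_path_prefixes: "finite (path_prefixes G x n)"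
proof -
  have "path_prefixes G x n = (\<lambda>(xs, k). take (Suc k) xs) ` (paths G x n \<times> {..<n})"
    by (auto simp: path_prefixes_def)
  then show ?thesis
    using finite_paths by (metis finite_cartesian_product finite_imageI finite_lessThan)
qed

lemma survival_prob_cong:
  fixes G :: "('l :: finite, 'v :: finite) cfg"
  assumes wf: "wf_cfg G" and "valid_sched G s" and "valid_sched G s'"
    and agree: "\<And>h. h \<in> path_prefixes G x n \<Longrightarrow> kind G (fst (last h)) = NondetLoc \<Longrightarrow> s h = s' h"
  shows "survival_prob G s x n = survival_prob G s' x n"
  unfolding survival_prob_eq_sum[OF wf assms(2)] survival_prob_eq_sum[OF wf assms(3)]
proof (rule sum.cong)
  fix xs assume "xs \<in> {xs \<in> paths G x n. term_state G \<notin> set xs}"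
  then obtain ys where xs: "xs = x # ys" and "length ys = n" and "xs \<in> paths G x n"
    by (auto simp: paths_def)
  then have "[x] @ take k ys \<in> path_prefixes G x n" if "k < length ys" for k
    using that unfolding path_prefixes_def by (intro CollectI exI[of _ xs] exI[of _ k]) simp
  then have "path_prob_from G s [x] ys = path_prob_from G s' [x] ys"
    by (intro path_prob_from_cong agree)
  then show "cyl_prob G s x xs = cyl_prob G s' x xs"
    by (simp add: xs)
qed simp

text \<open>Outside nondeterministic locations a scheduler's choice is irrelevant; \<open>trim_sched\<close> fixes
  it there, so that every choice ranges over a finite set.\<close>
definition trim_sched :: "('l, 'v) cfg \<Rightarrow> ('l, 'v) sched \<Rightarrow> ('l, 'v) sched" where
  "trim_sched G s h = (if h \<noteq> [] \<and> kind G (fst (last h)) = NondetLoc then s h else last h)"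

lemma trim_sched_in_succs: "valid_sched G s \<Longrightarrow> trim_sched G s h \<in> insert (last h) (succs G (last h))"
  by (auto simp: valid_sched_def trim_sched_def)

lemma valid_trim_sched: "valid_sched G s \<Longrightarrow> valid_sched G (trim_sched G s)"
  by (auto simp: valid_sched_def trim_sched_def)

lemma survival_prob_trim_sched:
  fixes G :: "('l :: finite, 'v :: finite) cfg"
  assumes "wf_cfg G" and "valid_sched G s"
  shows "survival_prob G (trim_sched G s) x n = survival_prob G s x n"
  using assms
  by (intro survival_prob_cong valid_trim_sched) (auto simp: trim_sched_def path_prefixes_def paths_def)

lemma valid_sched_pointwise_limit:
  fixes G :: "('l, 'v) cfg"
  assumes valid: "\<And>j. valid_sched G (sq j)" and lim: "\<And>h. \<forall>\<^sub>F j in sequentially. sq j h = s h"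
  shows "valid_sched G s"
  unfolding valid_sched_def
proof (intro allI impI)
  fix h :: "('l, 'v) state list" assume "h \<noteq> [] \<and> kind G (fst (last h)) = NondetLoc"
  moreover obtain j where "sq j h = s h"
    using eventually_happens'[OF sequentially_bot lim[of h]] by blast
  ultimately show "s h \<in> succs G (last h)"
    using valid[of j] by (auto simp: valid_sched_def)
qed

lemma survival_prob_limit_sched:
  fixes G :: "('l :: finite, 'v :: finite) cfg"
  assumes wf: "wf_cfg G" and valid: "\<And>n. valid_sched G (sq n)"
    and survives: "\<And>n. survival_prob G (sq n) x n > \<epsilon>"
  obtains s where "valid_sched G s" and "\<And>n. survival_prob G s x n > \<epsilon>"
proof -
  let ?sq = "\<lambda>n. trim_sched G (sq n)"
  have finite_choices: "finite (insert (last h) (succs G (last h)))" for h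
    by (simp add: succs_def)
  obtain r s where r: "strict_mono r" and lim: "\<And>h. \<forall>\<^sub>F j in sequentially. ?sq (r j) h = s h"
    using pointwise_convergent_subseq[where f="?sq" and V="\<lambda>h. insert (last h) (succs G (last h))",
        OF finite_choices trim_sched_in_succs[OF valid]]
    by blast
  have valid_s: "valid_sched G s"
    using valid_trim_sched[OF valid] lim by (rule valid_sched_pointwise_limit)
  have "survival_prob G s x n > \<epsilon>" for n
  proof -
    have "\<forall>\<^sub>F j in sequentially. n \<le> j \<and> (\<forall>h\<in>path_prefixes G x n. ?sq (r j) h = s h)"
      using finite_path_prefixes[of G x n] lim
      by (intro eventually_conj eventually_ge_at_top eventually_ball_finite) auto
    then obtain j where j: "n \<le> j" and agree: "\<forall>h\<in>path_prefixes G x n. ?sq (r j) h = s h"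
      using eventually_happens'[OF sequentially_bot] by blast
    have "\<epsilon> < survival_prob G (sq (r j)) x (r j)"
      by (rule survives)
    also have "\<dots> = survival_prob G (?sq (r j)) x (r j)"
      by (rule survival_prob_trim_sched[OF wf valid, symmetric])
    also have "\<dots> \<le> survival_prob G (?sq (r j)) x n"
      using j seq_suble[OF r, of j] by (intro survival_prob_antimono[OF wf]) simp
    also have "\<dots> = survival_prob G s x n"
      using agree by (intro survival_prob_cong[OF wf valid_trim_sched[OF valid] valid_s]) auto
    finally show ?thesis .
  qed
  then show ?thesis
    using that valid_s by blast
qed

section \<open>Decay of the survival probability\<close>

text \<open>\<open>follow_then P s\<close> first steers along the path \<open>P\<close> and from its last state on behaves as
  \<open>s\<close> would on a run started there.\<close>
definition follow_then :: "('l, 'v) state list \<Rightarrow> ('l, 'v) sched \<Rightarrow> ('l, 'v) sched" where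
  "follow_then P s h =
     (if h \<noteq> [] \<and> length h < length P \<and> h = take (length h) P then P ! length h
      else if length P \<le> length h \<and> take (length P - 1) h = butlast P then s (drop (length P - 1) h)
      else s h)"

lemma last_take_nth:
  assumes "0 < l" and "l \<le> length P"
  shows "last (take l P) = P ! (l - 1)"
proof -
  have "take l P \<noteq> []" using assms by (cases P) auto
  then show ?thesis using assms by (simp add: last_conv_nth min_def)
qed

lemma valid_follow_then:
  fixes G :: "('l, 'v) cfg"
  assumes valid: "valid_sched G s" and path: "is_path_from G a ys"
  shows "valid_sched G (follow_then (a # ys) s)"
  unfolding valid_sched_def
proof (intro allI impI)
  fix h :: "('l, 'v) state list" assume h: "h \<noteq> [] \<and> kind G (fst (last h)) = NondetLoc"
  let ?P = "a # ys"
  consider (on_path) "length h < length ?P" "h = take (length h) ?P"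
    | (after) "\<not> (length h < length ?P \<and> h = take (length h) ?P)"
        "length ?P \<le> length h" "take (length ?P - 1) h = butlast ?P"
    | (other) "\<not> (length h < length ?P \<and> h = take (length h) ?P)"
        "\<not> (length ?P \<le> length h \<and> take (length ?P - 1) h = butlast ?P)"
    by blast
  then show "follow_then ?P s h \<in> succs G (last h)"
  proof cases
    case on_path
    define l where "l = length h"
    have l: "0 < l" "l \<le> length ys" using on_path h by (auto simp: l_def)
    have "ys ! (l - 1) \<in> succs G (?P ! (l - 1))"
      using is_path_from_nth[OF path, of "l - 1"] l by simp
    moreover have "last h = ?P ! (l - 1)"
      using on_path l last_take_nth[of l ?P] by (simp add: l_def)
    ultimately show ?thesis
      using on_path h l by (simp add: follow_then_def l_def nth_Cons')
  next
    case after
    let ?d = "drop (length ys) h"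
    have "?d \<noteq> []" and "last ?d = last h"
      using after by (auto simp: last_drop)
    then have "s ?d \<in> succs G (last h)"
      using h valid unfolding valid_sched_def by metis
    then show ?thesis
      using after by (simp add: follow_then_def)
  next
    case other
    then show ?thesis
      using h valid by (auto simp: follow_then_def valid_sched_def)
  qed
qed

lemma follow_then_after_path:
  assumes "h \<noteq> []"
  shows "follow_then (a # ys) s (butlast (a # ys) @ h) = s h"
  using assms by (cases h) (simp_all add: follow_then_def del: butlast.simps)

lemma path_prob_follow_then_pos:
  assumes wf: "wf_cfg G" and path: "is_path_from G a ys"
  shows "path_prob_from G (follow_then (a # ys) s) [a] ys > 0"
proof (rule path_prob_from_pos[OF wf])
  fix k assume "k < length ys"
  then show "follow_then (a # ys) s ([a] @ take k ys) = ys ! k"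
    by (simp add: follow_then_def)
qed (use path in simp_all)

lemma cyl_prob_follow_then:
  assumes last: "last (a # ys) = x"
  shows "cyl_prob G (follow_then (a # ys) s) a (butlast (a # ys) @ x # ws)
         = path_prob_from G (follow_then (a # ys) s) [a] ys * cyl_prob G s x (x # ws)"
proof -
  let ?s' = "follow_then (a # ys) s" and ?pre = "butlast (a # ys)"
  have pre_x: "?pre @ [x] = a # ys"
    unfolding last[symmetric] by (rule append_butlast_last_id) simp
  have eq: "?pre @ x # ws = a # (ys @ ws)"
    using pre_x by (metis append.assoc append_Cons append_Nil)
  have "cyl_prob G ?s' a (?pre @ x # ws) = path_prob_from G ?s' [a] ys * path_prob_from G ?s' (?pre @ [x]) ws"
    unfolding eq by (simp add: path_prob_from_append pre_x del: butlast.simps)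
  also have "path_prob_from G ?s' (?pre @ [x]) ws = path_prob_from G s [x] ws"
    using follow_then_after_path[of _ a ys s]
    by (intro path_prob_from_shift[where pre="?pre" and h="[x]"]) simp_all
  finally show ?thesis by simp
qed

lemma paths_append:
  assumes path: "is_path_from G a ys" and last: "last (a # ys) = x" and ws: "ws \<in> paths G x n"
  shows "butlast (a # ys) @ ws \<in> paths G a (length ys + n)"
proof -
  obtain ws' where ws': "ws = x # ws'" "length ws' = n" "is_path_from G x ws'"
    using ws by (auto simp: paths_def)
  have "butlast (a # ys) @ [x] = a # ys"
    unfolding last[symmetric] by (rule append_butlast_last_id) simp
  then have "butlast (a # ys) @ ws = a # (ys @ ws')"
    using ws'(1) by (metis append.assoc append_Cons append_Nil)
  moreover have "a # (ys @ ws') \<in> paths G a (length ys + n)"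
    using path last ws' by (auto simp: paths_def is_path_from_append)
  ultimately show ?thesis by (simp only:)
qed

lemma survival_prob_follow_then:
  fixes G :: "('l :: finite, 'v :: finite) cfg"
  assumes wf: "wf_cfg G" and absorbing: "succs G (term_state G) = {term_state G}"
    and valid: "valid_sched G s" and path: "is_path_from G a ys" and last: "last (a # ys) = x"
    and not_term: "x \<noteq> term_state G"
  shows "path_prob_from G (follow_then (a # ys) s) [a] ys * survival_prob G s x n
         \<le> survival_prob G (follow_then (a # ys) s) a (length ys + n)"
proof -
  let ?s' = "follow_then (a # ys) s" and ?pre = "butlast (a # ys)"
  let ?p = "path_prob_from G ?s' [a] ys"
  let ?W = "{ws \<in> paths G x n. term_state G \<notin> set ws}"
  let ?Z = "{zs \<in> paths G a (length ys + n). term_state G \<notin> set zs}"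
  have valid': "valid_sched G ?s'"
    by (rule valid_follow_then[OF valid path])
  have pre_not_term: "term_state G \<notin> set ?pre"
    using is_path_from_absorbing[OF absorbing path] last not_term
    by (metis in_set_butlastD)
  have extend: "?pre @ ws \<in> ?Z" if "ws \<in> ?W" for ws
    using paths_append[OF path last] pre_not_term that by (simp del: butlast.simps)
  have "?p * survival_prob G s x n = (\<Sum>ws\<in>?W. ?p * cyl_prob G s x ws)"
    by (simp add: survival_prob_eq_sum[OF wf valid] sum_distrib_left)
  also have "\<dots> = (\<Sum>ws\<in>?W. cyl_prob G ?s' a (?pre @ ws))"
  proof (rule sum.cong[OF refl])
    fix ws assume "ws \<in> ?W"
    then obtain ws' where ws: "ws = x # ws'"
      by (auto simp: paths_def)
    show "?p * cyl_prob G s x ws = cyl_prob G ?s' a (?pre @ ws)"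
      by (simp only: ws cyl_prob_follow_then[OF last])
  qed
  also have "\<dots> = (\<Sum>zs\<in>(@) ?pre ` ?W. cyl_prob G ?s' a zs)"
    by (simp add: sum.reindex inj_on_def)
  also have "\<dots> \<le> (\<Sum>zs\<in>?Z. cyl_prob G ?s' a zs)"
    using extend cyl_prob_nonneg[OF wf] finite_paths[of G a "length ys + n"]
    by (intro sum_mono2) auto
  also have "\<dots> = survival_prob G ?s' a (length ys + n)"
    by (simp add: survival_prob_eq_sum[OF wf valid'])
  finally show ?thesis .
qed

lemma AST_prob_reach_term:
  fixes G :: "('l :: finite, 'v :: finite) cfg"
  assumes wf: "wf_cfg G" and ast: "AST G" and valid: "valid_sched G s"
  shows "prob_reach G s (init_state G) {term_state G} = 1"
proof -
  interpret prob_space "run_measure G s (init_state G)"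
    by (rule prob_space_run_measure[OF wf])
  have "(INF s \<in> {s. valid_sched G s}. prob_reach G s (init_state G) {term_state G})
        \<le> prob_reach G s (init_state G) {term_state G}"
    using valid by (intro cINF_lower bdd_belowI[of _ 0]) (auto simp: prob_reach_def)
  moreover have "prob_reach G s (init_state G) {term_state G} \<le> 1"
    unfolding prob_reach_def by (rule prob_le_1)
  ultimately show ?thesis
    using ast by (simp add: AST_def)
qed

lemma survival_prob_term_state:
  fixes G :: "('l :: finite, 'v :: finite) cfg"
  assumes "wf_cfg G" and "valid_sched G s"
  shows "survival_prob G s (term_state G) n = 0"
proof -
  have "{xs \<in> paths G (term_state G) n. term_state G \<notin> set xs} = {}"
    by (auto simp: paths_def)
  then show ?thesis
    by (simp only: survival_prob_eq_sum[OF assms] sum.empty)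
qed

lemma survival_prob_le_from_init:
  fixes G :: "('l :: finite, 'v :: finite) cfg"
  assumes wf: "wf_cfg G" and absorbing: "succs G (term_state G) = {term_state G}"
    and valid: "valid_sched G s" and reach: "x \<in> Reach G" and not_term: "x \<noteq> term_state G"
  obtains s' p where "valid_sched G s'" and "p > 0"
    and "\<And>n. survival_prob G s x n \<le> survival_prob G s' (init_state G) n / p"
proof -
  obtain ys where path: "is_path_from G (init_state G) ys" and last: "last (init_state G # ys) = x"
    using Reach_path_from_init[OF reach] .
  let ?s' = "follow_then (init_state G # ys) s"
  let ?p = "path_prob_from G ?s' [init_state G] ys"
  have p: "?p > 0"
    by (rule path_prob_follow_then_pos[OF wf path])
  have "survival_prob G s x n \<le> survival_prob G ?s' (init_state G) n / ?p" for n
  proof -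
    have "?p * survival_prob G s x n \<le> survival_prob G ?s' (init_state G) (length ys + n)"
      by (rule survival_prob_follow_then[OF wf absorbing valid path last not_term])
    also have "\<dots> \<le> survival_prob G ?s' (init_state G) n"
      by (rule survival_prob_antimono[OF wf]) simp
    finally have "survival_prob G s x n * ?p \<le> survival_prob G ?s' (init_state G) n"
      by (simp only: mult.commute)
    then show ?thesis
      by (rule iffD2[OF pos_le_divide_eq[OF p]])
  qed
  then show ?thesis
    using that valid_follow_then[OF valid path] p by blast
qed

lemma survival_prob_tendsto_0:
  fixes G :: "('l :: finite, 'v :: finite) cfg"
  assumes wf: "wf_cfg G" and absorbing: "succs G (term_state G) = {term_state G}"
    and ast: "AST G" and reach: "x \<in> Reach G" and valid: "valid_sched G s"
  shows "survival_prob G s x \<longlonglongrightarrow> 0"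
proof (cases "x = term_state G")
  case True
  then have "survival_prob G s x = (\<lambda>_. 0)"
    using survival_prob_term_state[OF wf valid] by (intro ext) simp
  then show ?thesis by simp
next
  case False
  then obtain s' p where valid': "valid_sched G s'" and "p > 0"
    and upper: "\<And>n. survival_prob G s x n \<le> survival_prob G s' (init_state G) n / p"
    using survival_prob_le_from_init[OF wf absorbing valid reach] by blast
  have "survival_prob G s' (init_state G) \<longlonglongrightarrow> 0"
    using survival_prob_tendsto[OF wf, of s' "init_state G"] AST_prob_reach_term[OF wf ast valid']
    by simp
  then have lim: "(\<lambda>n. survival_prob G s' (init_state G) n / p) \<longlonglongrightarrow> 0"
    by (rule tendsto_divide_zero)
  have "0 \<le> survival_prob G s x n" for n
    unfolding survival_prob_def by (rule measure_nonneg)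
  then have lower: "\<forall>\<^sub>F n in sequentially. 0 \<le> survival_prob G s x n"
    by simp
  from upper have "\<forall>\<^sub>F n in sequentially. survival_prob G s x n \<le> survival_prob G s' (init_state G) n / p"
    by simp
  from tendsto_sandwich[OF lower this tendsto_const lim] show ?thesis .
qed

lemma survival_prob_uniformly_small:
  fixes G :: "('l :: finite, 'v :: finite) cfg"
  assumes wf: "wf_cfg G" and absorbing: "succs G (term_state G) = {term_state G}"
    and ast: "AST G" and reach: "x \<in> Reach G" and "\<epsilon> > 0"
  obtains n where "\<And>s. valid_sched G s \<Longrightarrow> survival_prob G s x n \<le> \<epsilon>"
proof (rule ccontr)
  assume no_bound: "\<not> thesis"
  have bad: "\<forall>n. \<exists>s. valid_sched G s \<and> survival_prob G s x n > \<epsilon>"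
  proof (rule ccontr)
    assume "\<not> (\<forall>n. \<exists>s. valid_sched G s \<and> survival_prob G s x n > \<epsilon>)"
    then obtain n where "\<And>s. valid_sched G s \<Longrightarrow> survival_prob G s x n \<le> \<epsilon>"
      by (auto simp: not_less)
    then show False
      using that no_bound by blast
  qed
  obtain sq where sq: "\<forall>n. valid_sched G (sq n) \<and> survival_prob G (sq n) x n > \<epsilon>"
    using choice[OF bad] by blast
  obtain s where valid: "valid_sched G s" and big: "\<And>n. survival_prob G s x n > \<epsilon>"
    using survival_prob_limit_sched[OF wf, where sq=sq and x=x and \<epsilon>=\<epsilon>] sq by blast
  have "\<forall>\<^sub>F n in sequentially. survival_prob G s x n < \<epsilon>"
    using survival_prob_tendsto_0[OF wf absorbing ast reach valid] \<open>\<epsilon> > 0\<close>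
    by (rule order_tendstoD)
  then obtain N where "\<forall>n\<ge>N. survival_prob G s x n < \<epsilon>"
    by (auto simp: eventually_sequentially)
  then show False
    using big[of N] by auto
qed

lemma valid_sched_exists:
  assumes "wf_cfg G"
  shows "\<exists>s. valid_sched G s"
proof
  have "succs G \<sigma> \<noteq> {}" for \<sigma>
    using assms unfolding wf_cfg_def by blast
  then show "valid_sched G (\<lambda>h. SOME y. y \<in> succs G (last h))"
    by (simp add: valid_sched_def some_in_eq)
qed

lemma SUP_prob_reach_nonneg:
  fixes G :: "('l :: finite, 'v :: finite) cfg"
  assumes wf: "wf_cfg G"
  shows "0 \<le> (SUP s \<in> {s. valid_sched G s}. prob_reach G s x A)"
proof -
  obtain s where s: "valid_sched G s"
    using valid_sched_exists[OF wf] by blast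
  have "prob_reach G s x A \<le> 1" for s
    unfolding prob_reach_def by (rule prob_space.prob_le_1[OF prob_space_run_measure[OF wf]])
  then have "prob_reach G s x A \<le> (SUP s \<in> {s. valid_sched G s}. prob_reach G s x A)"
    using s by (intro cSUP_upper bdd_aboveI[of _ 1]) auto
  moreover have "0 \<le> prob_reach G s x A"
    unfolding prob_reach_def by (rule measure_nonneg)
  ultimately show ?thesis by linarith
qed

lemma SUP_prob_reach_tendsto_0:
  fixes G :: "('l :: finite, 'v :: finite) cfg"
  assumes wf: "wf_cfg G" and absorbing: "succs G (term_state G) = {term_state G}"
    and ast: "AST G" and reach: "x \<in> Reach G"
    and avoids: "\<And>F. finite F \<Longrightarrow> \<forall>\<^sub>F n in sequentially. T n \<inter> F = {}"
  shows "(\<lambda>n. SUP s \<in> {s. valid_sched G s}. prob_reach G s x (T n)) \<longlonglongrightarrow> 0"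
proof (rule order_tendstoI)
  fix c :: real
  assume "c < 0"
  then show "\<forall>\<^sub>F n in sequentially. c < (SUP s \<in> {s. valid_sched G s}. prob_reach G s x (T n))"
    using SUP_prob_reach_nonneg[OF wf, of x] by (intro always_eventually) (auto intro: less_le_trans)
next
  fix c :: real
  assume "c > 0"
  then obtain n where small: "\<And>s. valid_sched G s \<Longrightarrow> survival_prob G s x n \<le> c / 2"
    using survival_prob_uniformly_small[OF wf absorbing ast reach, of "c / 2"] by auto
  have "finite (\<Union> (set ` paths G x n) \<union> {term_state G})"
    using finite_paths by blast
  then have "\<forall>\<^sub>F m in sequentially. T m \<inter> (\<Union> (set ` paths G x n) \<union> {term_state G}) = {}"
    by (rule avoids)
  then show "\<forall>\<^sub>F m in sequentially. (SUP s \<in> {s. valid_sched G s}. prob_reach G s x (T m)) < c"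
  proof (rule eventually_mono)
    fix m assume disjoint: "T m \<inter> (\<Union> (set ` paths G x n) \<union> {term_state G}) = {}"
    have "prob_reach G s x (T m) \<le> c / 2" if "valid_sched G s" for s
      using prob_reach_le_survival_prob[OF wf absorbing that disjoint] small[OF that] by linarith
    then have "(SUP s \<in> {s. valid_sched G s}. prob_reach G s x (T m)) \<le> c / 2"
      using valid_sched_exists[OF wf] by (intro cSUP_least) auto
    then show "(SUP s \<in> {s. valid_sched G s}. prob_reach G s x (T m)) < c"
      using \<open>c > 0\<close> by linarith
  qed
qed

lemma eventually_tail_image_disjoint:
  assumes inj: "inj_on f {m. P m}" and "finite F"
  shows "\<forall>\<^sub>F n in sequentially. f ` {m. n \<le> m \<and> P m} \<inter> F = {}"
proof -
  have "finite (f -` F \<inter> {m. P m})"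
    using finite_vimage_IntI[OF \<open>finite F\<close> inj] .
  then obtain n0 where "f -` F \<inter> {m. P m} \<subseteq> {..<n0}"
    using finite_nat_bounded by blast
  then show ?thesis
    by (intro eventually_sequentiallyI[of n0]) auto
qed

theorem mainTheorem4:
  fixes G :: "('l :: finite, 'v :: finite) cfg"
    and \<sigma> :: "nat \<Rightarrow> ('l, 'v) state"
    and N :: enat
  assumes wf: "wf_cfg G"
    and term_absorbing: "succs G (term_state G) = {term_state G}"
    and ast: "AST G"
    and enum: "bij_betw \<sigma> {i. enat i < N} (Reach G)"
    and enum0: "\<sigma> 0 = term_state G"
  shows "\<forall>i. enat i < N \<longrightarrow>
           (\<lambda>n. SUP s \<in> {s. valid_sched G s}.
                   prob_reach G s (\<sigma> i) (\<sigma> ` {m. n \<le> m \<and> enat m < N})) \<longlonglongrightarrow> 0"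
proof (intro allI impI)
  fix i assume "enat i < N"
  then have "\<sigma> i \<in> Reach G"
    using enum by (auto simp: bij_betw_def)
  moreover have "\<forall>\<^sub>F n in sequentially. \<sigma> ` {m. n \<le> m \<and> enat m < N} \<inter> F = {}" if "finite F" for F
    using bij_betw_imp_inj_on[OF enum] that by (rule eventually_tail_image_disjoint)
  ultimately show "(\<lambda>n. SUP s \<in> {s. valid_sched G s}.
      prob_reach G s (\<sigma> i) (\<sigma> ` {m. n \<le> m \<and> enat m < N})) \<longlonglongrightarrow> 0"
    by (rule SUP_prob_reach_tendsto_0[OF wf term_absorbing ast])
qed

end
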